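(* Let $\mathbf{x}_1, \dots, \mathbf{x}_n \in [0,1]^p$ be given, with $n_0$ labeled and $n_1 = n - n_0$ unlabeled observations. For $\pi \in (0,1)$, $\alpha \in \mathbb{R}$ and a function $\eta$ on $[0,1]^p$, define the profile log-likelihood $\ell_n(\pi, \alpha, \eta)$ as \[ \sum_{i=1}^{n_0} \log\left[\frac{n_0 e^{\alpha + \eta(\mathbf{x}_i) - \tau}}{n_1\pi + (n_0 + n_1\pi) e^{\alpha + \eta(\mathbf{x}_i) - \tau}}\right] + \sum_{i=n_0+1}^n \log\left[\frac{n_1\pi + n_1\pi\, e^{\alpha + \eta(\mathbf{x}_i) - \tau}}{n_1\pi + (n_0 + n_1\pi) e^{\alpha + \eta(\mathbf{x}_i) - \tau}}\right], \] where $\tau = \log\{(1-\pi)/\pi\}$. Let $(\pi^{[r]}, \alpha^{[r]}, \eta^{[r]})$, $r = 0, 1, 2, \dots$, be the iterates of the EM-type algorithm described in the context, started from any initial values $(\pi^{[0]}, \alpha^{[0]}, \eta^{[0]})$. Then for every $r \geq 0$, \[ \ell_n(\pi^{[r]}, \alpha^{[r]}, \eta^{[r]}) \leq \ell_n(\pi^{[r+1]}, \alpha^{[r+1]}, \eta^{[r+1]}). \]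
   Context: This is the PU setting under the generalized additive exponential tilting model. Labeled $\mathbf{x}_1, \dots, \mathbf{x}_{n_0}$ are drawn from $g$. Unlabeled $\mathbf{x}_{n_0+1}, \dots, \mathbf{x}_n$ are drawn from $\pi g + (1-\pi) h$. The model is \[ g(\mathbf{x})/h(\mathbf{x}) = \omega(\mathbf{x}) = \exp\{\alpha + \eta(\mathbf{x})\}, \qquad \eta(\mathbf{x}) = \sum_{j=1}^p u_j(x_j). \] Set $y_i = 1$ for $i \le n_0$. The EM-type algorithm is as follows. At iteration $r$: (E-step) For $i = n_0+1, \dots, n$, set \[ y_i^{[r+1]} = \frac{\pi^{[r]} \exp\{\alpha^{[r]} + \eta^{[r]}(\mathbf{x}_i)\}}{\pi^{[r]} \exp\{\alpha^{[r]} + \eta^{[r]}(\mathbf{x}_i)\} + 1 - \pi^{[r]}}. \] Set $y_i^{[r+1]} = 1$ for $i \le n_0$. (M-step) Maximize, over $(\pi, \alpha, \eta)$ in the sieve space and over $\mathbf{p} = (p_1, \dots, p_n)$ with $p_i > 0$, $\sum_i p_i = 1$, $\sum_i p_i \exp\{\alpha + \eta(\mathbf{x}_i)\} = 1$, the function \[ Q^{[r+1]} = \sum_{i=1}^n \log p_i + \sum_{i=1}^{n_0} \{\alpha + \eta(\mathbf{x}_i)\} + \sum_{i=n_0+1}^n \big[y_i^{[r+1]} \log\{\pi e^{\alpha + \eta(\mathbf{x}_i)}\} + (1 - y_i^{[r+1]}) \log(1-\pi)\big]. \] This gives $\pi^{[r+1]} = n_1^{-1} \sum_{i > n_0} y_i^{[r+1]}$.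 The pair $(\alpha^{[r+1]}, \eta^{[r+1]})$ is obtained as follows. First maximize \[ \sum_{i=1}^n y_i^{[r+1]} \{\alpha_* + \eta(\mathbf{x}_i)\} - \sum_{i=1}^n \log[1 + \exp\{\alpha_* + \eta(\mathbf{x}_i)\}] \] over $(\alpha_*, \eta)$. Then set $\alpha^{[r+1]} = \alpha_*^{[r+1]} - c^{[r+1]}$, where \[ c^{[r+1]} = \log(n_0/n_1 + \pi^{[r+1]}) - \log(1 - \pi^{[r+1]}). \] The sieve space restricts $\eta = \sum_j \nu_j(x_j)$ with each $\nu_j$ a spline $\nu_j(x) = \sum_{k=1}^{K_n+m} \theta_{jk} N_k^{[m]}(x)$ in normalized B-splines of order $m$ on $[0,1]$ with $K_n$ interior knots. The coefficients satisfy $\max_k |\theta_{jk}| \le q_j$ and $\int_0^1 \nu_j = 0$. *)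

theory Defs
  imports "HOL-Analysis.Analysis"
begin

definition knot :: "nat \<Rightarrow> nat \<Rightarrow> (nat \<Rightarrow> real) \<Rightarrow> nat \<Rightarrow> real" where
  "knot m K xi k = (if k \<le> m then 0 else if k \<le> m + K then xi (k - m) else 1)"

text \<open>Normalized B-splines N_k^[d] w.r.t. a knot sequence t, via the Cox--de Boor
  recursion (0/0 = 0 convention, which Isabelle division provides).\<close>
fun bsp :: "(nat \<Rightarrow> real) \<Rightarrow> nat \<Rightarrow> nat \<Rightarrow> real \<Rightarrow> real" where
  "bsp t 0 k x = 0"
| "bsp t (Suc 0) k x =
     (if (t k \<le> x \<and> x < t (Suc k)) \<or> (t k < t (Suc k) \<and> t (Suc k) = 1 \<and> x = 1)
      then 1 else 0)"
| "bsp t (Suc (Suc d)) k x =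
     (x - t k) / (t (k + Suc d) - t k) * bsp t (Suc d) k x
     + (t (k + Suc (Suc d)) - x) / (t (k + Suc (Suc d)) - t (Suc k)) * bsp t (Suc d) (Suc k) x"

definition Bspline :: "nat \<Rightarrow> nat \<Rightarrow> (nat \<Rightarrow> real) \<Rightarrow> nat \<Rightarrow> real \<Rightarrow> real" where
  "Bspline m K xi k x = bsp (knot m K xi) m k x"

definition interior_knots :: "nat \<Rightarrow> (nat \<Rightarrow> real) \<Rightarrow> bool" where
  "interior_knots K xi \<longleftrightarrow> (\<forall>k\<in>{1..K}. 0 < xi k \<and> xi k < 1) \<and>
     (\<forall>k\<in>{1..<K}. xi k < xi (Suc k))"

definition sieve :: "nat \<Rightarrow> nat \<Rightarrow> (nat \<Rightarrow> real) \<Rightarrow> ('p::finite \<Rightarrow> real)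
                      \<Rightarrow> (real^'p \<Rightarrow> real) set" where
  "sieve m K xi q = {eta. \<exists>(\<theta>::'p \<Rightarrow> nat \<Rightarrow> real).
      (\<forall>j. \<forall>k\<in>{1..K+m}. \<bar>\<theta> j k\<bar> \<le> q j) \<and>
      (\<forall>j. integral {0..1} (\<lambda>u. \<Sum>k=1..K+m. \<theta> j k * Bspline m K xi k u) = 0) \<and>
      eta = (\<lambda>z. \<Sum>j\<in>UNIV. \<Sum>k=1..K+m. \<theta> j k * Bspline m K xi k (z $ j))}"

definition profile_loglik ::
  "nat \<Rightarrow> nat \<Rightarrow> (nat \<Rightarrow> real^'p) \<Rightarrow> real \<Rightarrow> real \<Rightarrow> (real^'p \<Rightarrow> real) \<Rightarrow> real" where
  "profile_loglik n n0 x \<pi> \<alpha> \<eta> =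
     (let \<tau> = ln ((1 - \<pi>) / \<pi>); n1 = real (n - n0);
          e = (\<lambda>i. exp (\<alpha> + \<eta> (x i) - \<tau>)) in
      (\<Sum>i=1..n0. ln (real n0 * e i / (n1 * \<pi> + (real n0 + n1 * \<pi>) * e i)))
      + (\<Sum>i=n0+1..n. ln ((n1 * \<pi> + n1 * \<pi> * e i) / (n1 * \<pi> + (real n0 + n1 * \<pi>) * e i))))"

definition estep ::
  "nat \<Rightarrow> (nat \<Rightarrow> real^'p) \<Rightarrow> real \<Rightarrow> real \<Rightarrow> (real^'p \<Rightarrow> real) \<Rightarrow> nat \<Rightarrow> real" where
  "estep n0 x \<pi> \<alpha> \<eta> i =
     (if i \<le> n0 then 1
      else \<pi> * exp (\<alpha> + \<eta> (x i)) / (\<pi> * exp (\<alpha> + \<eta> (x i)) + 1 - \<pi>))"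

definition mobj ::
  "nat \<Rightarrow> (nat \<Rightarrow> real^'p) \<Rightarrow> (nat \<Rightarrow> real) \<Rightarrow> real \<Rightarrow> (real^'p \<Rightarrow> real) \<Rightarrow> real" where
  "mobj n x y a \<eta> =
     (\<Sum>i=1..n. y i * (a + \<eta> (x i)) - ln (1 + exp (a + \<eta> (x i))))"

end

theory Submission
  imports Defs
begin

(* With b = n1 pi / (n0 + n1 pi) and t_i = alpha + c + eta(x_i), c the offset of the M-step,
   the profile log-likelihood becomes the observed-data log-likelihood
     n0 ln(1 - b) + sum_{i <= n0} [t_i - ln(1 + e^t_i)] + sum_{i > n0} [ln(1 + b e^t_i) - ln(1 + e^t_i)]
   of a two-group model, and the E-step weights become the posteriors y_i = b e^t_i / (1 + b e^t_i).  By concavity of ln, the log-likelihood minus the surrogate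
     Q(b, t) = n0 ln(1 - b) + (sum_{i > n0} y_i) ln b + sum_i [y_i t_i - ln(1 + e^t_i)]
   is maximal at the current iterate; and the M-step does not decrease Q, because the pi-update
   makes b the maximiser S / (n0 + S) of the binomial part while the logistic fit is at least as
   good as the old (alpha + c, eta), which is admissible. *)

lemma ln_one_plus_diff_ge:
  fixes s s' :: real
  assumes "0 < s" and "0 < s'"
  shows "s / (1 + s) * (ln s' - ln s) \<le> ln (1 + s') - ln (1 + s)"
proof -
  define w where "w = s / (1 + s)"
  have w: "0 \<le> w" "w \<le> 1" using assms by (simp_all add: w_def)
  have "(1 - w) * ln 1 + w * ln (s' / s) \<le> ln ((1 - w) * 1 + w * (s' / s))"
    using concave_onD[OF ln_concave w, of 1 "s' / s"] assms by simp
  also have "(1 - w) * 1 + w * (s' / s) = (1 + s') / (1 + s)"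
    using assms by (simp add: w_def field_simps)
  finally show ?thesis
    using assms by (simp add: w_def ln_div)
qed

lemma binomial_loglik_le_at_mle:
  fixes N S b :: real
  assumes "0 < N" and "0 < S" and "0 < b" and "b < 1"
  shows "N * ln (1 - b) + S * ln b \<le> N * ln (1 - S / (N + S)) + S * ln (S / (N + S))"
proof -
  define w where "w = S / (N + S)"
  have w: "0 < w" "w < 1" using assms by (simp_all add: w_def)
  have "(1 - w) * ln ((1 - b) / (1 - w)) + w * ln (b / w)
          \<le> ln ((1 - w) * ((1 - b) / (1 - w)) + w * (b / w))"
    using concave_onD[OF ln_concave, of w "(1 - b) / (1 - w)" "b / w"] assms w by simp
  also have "\<dots> = 0" using w by simp
  finally have "(1 - w) * (ln (1 - b) - ln (1 - w)) + w * (ln b - ln w) \<le> 0"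
    using assms w by (simp add: ln_div)
  then have "(N + S) * ((1 - w) * (ln (1 - b) - ln (1 - w)) + w * (ln b - ln w)) \<le> 0"
    using assms by (simp add: mult_nonneg_nonpos)
  moreover have "(N + S) * (1 - w) = N" "(N + S) * w = S"
    using assms by (simp_all add: w_def field_simps)
  ultimately have "N * (ln (1 - b) - ln (1 - w)) + S * (ln b - ln w) \<le> 0"
    by (simp only: distrib_left flip: mult.assoc)
  then show ?thesis
    by (simp add: w_def[symmetric] algebra_simps)
qed

definition obs_loglik :: "nat \<Rightarrow> nat \<Rightarrow> real \<Rightarrow> (nat \<Rightarrow> real) \<Rightarrow> real" where
  "obs_loglik n n0 b t =
     real n0 * ln (1 - b) + (\<Sum>i=1..n0. t i - ln (1 + exp (t i)))
     + (\<Sum>i=n0+1..n. ln (1 + b * exp (t i)) - ln (1 + exp (t i)))"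

definition posterior :: "nat \<Rightarrow> real \<Rightarrow> (nat \<Rightarrow> real) \<Rightarrow> nat \<Rightarrow> real" where
  "posterior n0 b t i = (if i \<le> n0 then 1 else b * exp (t i) / (1 + b * exp (t i)))"

definition logistic_loglik :: "nat \<Rightarrow> (nat \<Rightarrow> real) \<Rightarrow> (nat \<Rightarrow> real) \<Rightarrow> real" where
  "logistic_loglik n y t = (\<Sum>i=1..n. y i * t i - ln (1 + exp (t i)))"

definition em_surrogate ::
  "nat \<Rightarrow> nat \<Rightarrow> (nat \<Rightarrow> real) \<Rightarrow> real \<Rightarrow> (nat \<Rightarrow> real) \<Rightarrow> real" where
  "em_surrogate n n0 y b t =
     real n0 * ln (1 - b) + (\<Sum>i=n0+1..n. y i) * ln b + logistic_loglik n y t"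

lemma sum_split_at:
  fixes f :: "nat \<Rightarrow> 'a::comm_monoid_add"
  assumes "n0 \<le> n"
  shows "(\<Sum>i=1..n. f i) = (\<Sum>i=1..n0. f i) + (\<Sum>i=n0+1..n. f i)"
  using sum.ub_add_nat[of 1 n0 f "n - n0"] assms by simp

lemma obs_loglik_minus_em_surrogate:
  assumes "n0 \<le> n" and "0 < b" and "\<And>i. i \<le> n0 \<Longrightarrow> y i = 1"
  shows "obs_loglik n n0 b t - em_surrogate n n0 y b t
           = (\<Sum>i=n0+1..n. ln (1 + b * exp (t i)) - y i * ln (b * exp (t i)))"
proof -
  have "logistic_loglik n y t = (\<Sum>i=1..n0. t i - ln (1 + exp (t i)))
          + (\<Sum>i=n0+1..n. y i * t i - ln (1 + exp (t i)))"
    unfolding logistic_loglik_def sum_split_at[OF assms(1)] using assms(3) by simp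
  moreover have "ln (b * exp (t i)) = ln b + t i" for i
    using assms(2) by (simp add: ln_mult)
  ultimately show ?thesis
    by (simp add: obs_loglik_def em_surrogate_def sum_subtractf sum_distrib_left
        sum.distrib algebra_simps)
qed

lemma obs_loglik_minus_em_surrogate_le:
  fixes t t' :: "nat \<Rightarrow> real"
  assumes "n0 \<le> n" and "0 < b" and "0 < b'"
  defines "y \<equiv> posterior n0 b t"
  shows "obs_loglik n n0 b t - em_surrogate n n0 y b t
           \<le> obs_loglik n n0 b' t' - em_surrogate n n0 y b' t'"
proof -
  have y: "y i = 1" if "i \<le> n0" for i using that by (simp add: y_def posterior_def)
  have pointwise: "ln (1 + b * exp (t i)) - y i * ln (b * exp (t i))
          \<le> ln (1 + b' * exp (t' i)) - y i * ln (b' * exp (t' i))" if "n0 < i" for i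
  proof -
    have "y i * (ln (b' * exp (t' i)) - ln (b * exp (t i)))
            \<le> ln (1 + b' * exp (t' i)) - ln (1 + b * exp (t i))"
      using ln_one_plus_diff_ge[of "b * exp (t i)" "b' * exp (t' i)"] that assms
      by (simp add: y_def posterior_def)
    then show ?thesis by (simp add: right_diff_distrib)
  qed
  have "(\<Sum>i=n0+1..n. ln (1 + b * exp (t i)) - y i * ln (b * exp (t i)))
          \<le> (\<Sum>i=n0+1..n. ln (1 + b' * exp (t' i)) - y i * ln (b' * exp (t' i)))"
    using pointwise by (intro sum_mono) simp
  then show ?thesis
    using obs_loglik_minus_em_surrogate[where y = y and t = t, OF assms(1,2) y]
      obs_loglik_minus_em_surrogate[where y = y and t = t', OF assms(1,3) y] by linarith
qed

lemma em_surrogate_le: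
  assumes "0 < n0" and "0 < b" and "b < 1"
    and S: "0 < (\<Sum>i=n0+1..n. y i)"
    and b': "b' = (\<Sum>i=n0+1..n. y i) / (real n0 + (\<Sum>i=n0+1..n. y i))"
    and "logistic_loglik n y t \<le> logistic_loglik n y t'"
  shows "em_surrogate n n0 y b t \<le> em_surrogate n n0 y b' t'"
proof -
  have "real n0 * ln (1 - b) + (\<Sum>i=n0+1..n. y i) * ln b
          \<le> real n0 * ln (1 - b') + (\<Sum>i=n0+1..n. y i) * ln b'"
    unfolding b' using assms by (intro binomial_loglik_le_at_mle) simp_all
  then show ?thesis
    using assms(6) unfolding em_surrogate_def by linarith
qed

lemma posterior_bounds:
  assumes "0 < b" and "n0 < i"
  shows "0 < posterior n0 b t i" and "posterior n0 b t i < 1"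
proof -
  have "0 < b * exp (t i)" using assms(1) by simp
  then show "0 < posterior n0 b t i" and "posterior n0 b t i < 1"
    using assms(2) by (simp_all add: posterior_def)
qed

lemma obs_loglik_em_ascent:
  fixes t t' :: "nat \<Rightarrow> real"
  assumes "0 < n0" and "n0 < n" and "0 < b" and "b < 1"
  defines "y \<equiv> posterior n0 b t"
  defines "S \<equiv> \<Sum>i=n0+1..n. y i"
  assumes "logistic_loglik n y t \<le> logistic_loglik n y t'"
  shows "obs_loglik n n0 b t \<le> obs_loglik n n0 (S / (real n0 + S)) t'"
proof -
  have "0 < S"
    unfolding S_def y_def using assms(2,3) by (intro sum_pos) (auto intro: posterior_bounds)
  then have "em_surrogate n n0 y b t \<le> em_surrogate n n0 y (S / (real n0 + S)) t'"
    using assms by (intro em_surrogate_le) (simp_all add: S_def)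
  moreover have "obs_loglik n n0 b t - em_surrogate n n0 y b t
      \<le> obs_loglik n n0 (S / (real n0 + S)) t' - em_surrogate n n0 y (S / (real n0 + S)) t'"
    unfolding y_def using assms \<open>0 < S\<close> by (intro obs_loglik_minus_em_surrogate_le) simp_all
  ultimately show ?thesis by simp
qed

(* b and c of the header: b is the expected fraction of the g-draws that fall in the unlabeled
   sample, and the M-step sets alpha = alpha_* - c. *)
definition unlabeled_share :: "real \<Rightarrow> real \<Rightarrow> real \<Rightarrow> real" where
  "unlabeled_share N0 N1 \<pi> = N1 * \<pi> / (N0 + N1 * \<pi>)"

definition em_offset :: "real \<Rightarrow> real \<Rightarrow> real \<Rightarrow> real" where
  "em_offset N0 N1 \<pi> = ln (N0 / N1 + \<pi>) - ln (1 - \<pi>)"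

lemma unlabeled_share_bounds:
  assumes "0 < N0" and "0 < N1" and "0 < \<pi>"
  shows "0 < unlabeled_share N0 N1 \<pi>" and "unlabeled_share N0 N1 \<pi> < 1"
proof -
  have k: "0 < N1 * \<pi>" using assms by simp
  with assms(1) have d: "0 < N0 + N1 * \<pi>" by linarith
  show "0 < unlabeled_share N0 N1 \<pi>"
    unfolding unlabeled_share_def using k d by (rule divide_pos_pos)
  show "unlabeled_share N0 N1 \<pi> < 1"
    unfolding unlabeled_share_def divide_less_eq_1_pos[OF d] using assms(1) by simp
qed

lemma unlabeled_share_mult_exp_em_offset:
  assumes "0 \<le> N0" and "0 < N1" and "0 < \<pi>" and "\<pi> < 1"
  shows "unlabeled_share N0 N1 \<pi> * exp (em_offset N0 N1 \<pi>) = \<pi> / (1 - \<pi>)"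
proof -
  have "0 < N0 + N1 * \<pi>" using assms by (simp add: add_nonneg_pos)
  moreover from this have "exp (em_offset N0 N1 \<pi>) = (N0 + N1 * \<pi>) / (N1 * (1 - \<pi>))"
    using assms by (simp add: em_offset_def exp_diff field_simps)
  ultimately show ?thesis
    using assms by (simp add: unlabeled_share_def)
qed

lemma exp_diff_ln_odds:
  assumes "0 \<le> N0" and "0 < N1" and "0 < \<pi>" and "\<pi> < 1"
  shows "exp (s - ln ((1 - \<pi>) / \<pi>)) = unlabeled_share N0 N1 \<pi> * exp (s + em_offset N0 N1 \<pi>)"
proof -
  have "unlabeled_share N0 N1 \<pi> * exp (s + em_offset N0 N1 \<pi>)
          = unlabeled_share N0 N1 \<pi> * exp (em_offset N0 N1 \<pi>) * exp s"
    by (simp add: exp_add mult_ac)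
  also have "\<dots> = \<pi> / (1 - \<pi>) * exp s"
    using unlabeled_share_mult_exp_em_offset[OF assms] by simp
  finally show ?thesis
    using assms by (simp add: exp_diff)
qed

lemma estep_eq_posterior:
  assumes "0 \<le> N0" and "0 < N1" and "0 < \<pi>" and "\<pi> < 1"
  shows "estep n0 x \<pi> \<alpha> \<eta>
           = posterior n0 (unlabeled_share N0 N1 \<pi>) (\<lambda>i. \<alpha> + em_offset N0 N1 \<pi> + \<eta> (x i))"
proof
  fix i
  have "unlabeled_share N0 N1 \<pi> * exp (\<alpha> + em_offset N0 N1 \<pi> + \<eta> (x i))
          = unlabeled_share N0 N1 \<pi> * exp (em_offset N0 N1 \<pi>) * exp (\<alpha> + \<eta> (x i))"
    by (simp add: mult.assoc add_ac flip: exp_add)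
  also have "\<dots> = \<pi> / (1 - \<pi>) * exp (\<alpha> + \<eta> (x i))"
    using unlabeled_share_mult_exp_em_offset[OF assms] by simp
  finally have share: "unlabeled_share N0 N1 \<pi> * exp (\<alpha> + em_offset N0 N1 \<pi> + \<eta> (x i))
      = \<pi> / (1 - \<pi>) * exp (\<alpha> + \<eta> (x i))" .
  have "0 < \<pi> * exp (\<alpha> + \<eta> (x i))" using assms by simp
  then have "1 - \<pi> \<noteq> 0" and "\<pi> * exp (\<alpha> + \<eta> (x i)) + (1 - \<pi>) \<noteq> 0"
    using assms by linarith+
  then have "\<pi> * exp (\<alpha> + \<eta> (x i)) / (\<pi> * exp (\<alpha> + \<eta> (x i)) + 1 - \<pi>)
      = \<pi> / (1 - \<pi>) * exp (\<alpha> + \<eta> (x i)) / (1 + \<pi> / (1 - \<pi>) * exp (\<alpha> + \<eta> (x i)))"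
    by (simp add: divide_simps)
  then show "estep n0 x \<pi> \<alpha> \<eta> i
      = posterior n0 (unlabeled_share N0 N1 \<pi>) (\<lambda>i. \<alpha> + em_offset N0 N1 \<pi> + \<eta> (x i)) i"
    by (simp add: estep_def posterior_def share)
qed

lemma profile_summand_ratios:
  fixes N0 k E :: real
  assumes "0 \<le> N0" and "0 < k" and "0 < E"
  defines "b \<equiv> k / (N0 + k)"
  shows "N0 * (b * E) / (k + (N0 + k) * (b * E)) = (1 - b) * (E / (1 + E))"
    and "(k + k * (b * E)) / (k + (N0 + k) * (b * E)) = (1 + b * E) / (1 + E)"
proof -
  have "N0 + k \<noteq> 0" using assms by simp
  then have denom: "k + (N0 + k) * (b * E) = k * (1 + E)" and "N0 * b = k * (1 - b)"
    by (simp_all add: b_def field_simps)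
  then have "N0 * (b * E) / (k + (N0 + k) * (b * E)) = k * ((1 - b) * E) / (k * (1 + E))"
    by (simp add: mult.assoc[symmetric])
  with assms show "N0 * (b * E) / (k + (N0 + k) * (b * E)) = (1 - b) * (E / (1 + E))"
    by simp
  from denom have "(k + k * (b * E)) / (k + (N0 + k) * (b * E)) = k * (1 + b * E) / (k * (1 + E))"
    by (simp add: distrib_left)
  with assms show "(k + k * (b * E)) / (k + (N0 + k) * (b * E)) = (1 + b * E) / (1 + E)"
    by simp
qed

lemma profile_loglik_eq_obs_loglik:
  assumes "0 < n0" and "n0 < n" and "0 < \<pi>" and "\<pi> < 1"
  defines "b \<equiv> unlabeled_share (real n0) (real (n - n0)) \<pi>"
    and "c \<equiv> em_offset (real n0) (real (n - n0)) \<pi>"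
  shows "profile_loglik n n0 x \<pi> \<alpha> \<eta> = obs_loglik n n0 b (\<lambda>i. \<alpha> + c + \<eta> (x i))"
proof -
  define N0 N1 where "N0 = real n0" and "N1 = real (n - n0)"
  define t where "t i = \<alpha> + c + \<eta> (x i)" for i
  have N: "0 < N0" "0 < N1" "0 < N1 * \<pi>" using assms by (simp_all add: N0_def N1_def)
  have b: "0 < b" "b < 1"
    using N assms(3) unfolding b_def N0_def N1_def by (simp_all add: unlabeled_share_bounds)
  have b_eq: "b = N1 * \<pi> / (N0 + N1 * \<pi>)"
    by (simp add: b_def unlabeled_share_def N0_def N1_def)
  have e: "exp (\<alpha> + \<eta> (x i) - ln ((1 - \<pi>) / \<pi>)) = b * exp (t i)" for i
    using exp_diff_ln_odds[of "real n0" "real (n - n0)" \<pi> "\<alpha> + \<eta> (x i)"] assms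
    by (simp add: b_def c_def t_def add_ac)
  have one_plus_exp: "0 < 1 + exp (t i)" "1 + exp (t i) \<noteq> 0" for i
    using exp_gt_zero[of "t i"] by linarith+
  note ratios = profile_summand_ratios[OF less_imp_le[OF N(1)] N(3) exp_gt_zero, folded b_eq]
  have labeled: "ln (N0 * (b * exp (t i)) / (N1 * \<pi> + (N0 + N1 * \<pi>) * (b * exp (t i))))
      = ln (1 - b) + (t i - ln (1 + exp (t i)))" for i
    using b one_plus_exp by (simp add: ratios ln_mult ln_div)
  have unlabeled: "ln ((N1 * \<pi> + N1 * \<pi> * (b * exp (t i))) / (N1 * \<pi> + (N0 + N1 * \<pi>) * (b * exp (t i))))
      = ln (1 + b * exp (t i)) - ln (1 + exp (t i))" for i
  proof -
    have "0 < 1 + b * exp (t i)" using b(1) by (simp add: add_pos_pos)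
    then show ?thesis using one_plus_exp[of i] by (simp add: ratios ln_div)
  qed
  have t_eq: "(\<lambda>i. \<alpha> + c + \<eta> (x i)) = t" by (simp add: fun_eq_iff t_def)
  show ?thesis
    unfolding t_eq profile_loglik_def obs_loglik_def Let_def e
    by (simp add: N0_def[symmetric] N1_def[symmetric] labeled unlabeled sum.distrib)
qed

lemma em_pi_update_bounds:
  assumes "0 < n0" and "n0 < n" and "0 < \<pi>" and "\<pi> < 1"
  shows "0 < (\<Sum>i=n0+1..n. estep n0 x \<pi> \<alpha> \<eta> i) / real (n - n0)"
    and "(\<Sum>i=n0+1..n. estep n0 x \<pi> \<alpha> \<eta> i) / real (n - n0) < 1"
proof -
  define b where "b = unlabeled_share (real n0) (real (n - n0)) \<pi>"
  define t where "t i = \<alpha> + em_offset (real n0) (real (n - n0)) \<pi> + \<eta> (x i)" for i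
  have "0 < b" using assms by (simp add: b_def unlabeled_share_bounds)
  have y: "estep n0 x \<pi> \<alpha> \<eta> = posterior n0 b t"
    unfolding b_def t_def using assms by (intro estep_eq_posterior) simp_all
  have "0 < (\<Sum>i=n0+1..n. posterior n0 b t i)"
    using assms(2) \<open>0 < b\<close> by (intro sum_pos) (auto intro: posterior_bounds)
  moreover have "(\<Sum>i=n0+1..n. posterior n0 b t i) < (\<Sum>i=n0+1..n. 1)"
    using assms(2) \<open>0 < b\<close> by (intro sum_strict_mono) (auto intro: posterior_bounds)
  ultimately show "0 < (\<Sum>i=n0+1..n. estep n0 x \<pi> \<alpha> \<eta> i) / real (n - n0)"
    and "(\<Sum>i=n0+1..n. estep n0 x \<pi> \<alpha> \<eta> i) / real (n - n0) < 1"
    using assms(2) by (simp_all add: y of_nat_diff)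
qed

lemma profile_loglik_em_step:
  fixes x :: "nat \<Rightarrow> real^'p::finite" and \<eta> \<eta>' :: "real^'p \<Rightarrow> real" and \<pi> \<alpha> a :: real
  assumes "0 < n0" and "n0 < n" and "0 < \<pi>" and "\<pi> < 1"
  defines "y \<equiv> estep n0 x \<pi> \<alpha> \<eta>"
  defines "\<pi>' \<equiv> (\<Sum>i=n0+1..n. y i) / real (n - n0)"
  assumes "mobj n x y (\<alpha> + em_offset (real n0) (real (n - n0)) \<pi>) \<eta> \<le> mobj n x y a \<eta>'"
  shows "profile_loglik n n0 x \<pi> \<alpha> \<eta>
           \<le> profile_loglik n n0 x \<pi>' (a - em_offset (real n0) (real (n - n0)) \<pi>') \<eta>'"
proof -
  define b where "b = unlabeled_share (real n0) (real (n - n0)) \<pi>"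
  define t where "t = (\<lambda>i. \<alpha> + em_offset (real n0) (real (n - n0)) \<pi> + \<eta> (x i))"
  define S where "S = (\<Sum>i=n0+1..n. y i)"
  have "0 < b" "b < 1" using assms by (simp_all add: b_def unlabeled_share_bounds)
  have y: "y = posterior n0 b t"
    unfolding y_def b_def t_def using assms by (intro estep_eq_posterior) simp_all
  have \<pi>': "0 < \<pi>'" "\<pi>' < 1"
    unfolding \<pi>'_def y_def using em_pi_update_bounds assms by blast+
  have share': "S / (real n0 + S) = unlabeled_share (real n0) (real (n - n0)) \<pi>'"
    using assms(2) by (simp add: unlabeled_share_def \<pi>'_def S_def)
  have "logistic_loglik n y t \<le> logistic_loglik n y (\<lambda>i. a + \<eta>' (x i))"
    using assms(7) by (simp add: mobj_def logistic_loglik_def t_def add.assoc)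
  then have ascent: "obs_loglik n n0 b t \<le> obs_loglik n n0 (S / (real n0 + S)) (\<lambda>i. a + \<eta>' (x i))"
    unfolding y S_def using assms(1,2) \<open>0 < b\<close> \<open>b < 1\<close> by (intro obs_loglik_em_ascent)
  have "profile_loglik n n0 x \<pi> \<alpha> \<eta> = obs_loglik n n0 b t"
    using profile_loglik_eq_obs_loglik[OF assms(1-4)] by (simp add: b_def t_def)
  also note ascent
  also have "obs_loglik n n0 (S / (real n0 + S)) (\<lambda>i. a + \<eta>' (x i))
      = profile_loglik n n0 x \<pi>' (a - em_offset (real n0) (real (n - n0)) \<pi>') \<eta>'"
    using profile_loglik_eq_obs_loglik[OF assms(1,2) \<pi>',
        of x "a - em_offset (real n0) (real (n - n0)) \<pi>'" \<eta>']
    by (simp add: share')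
  finally show ?thesis .
qed

theorem proposition2:
  fixes n n0 m K :: nat
    and x :: "nat \<Rightarrow> real^'p::finite"
    and xi :: "nat \<Rightarrow> real" and q :: "'p \<Rightarrow> real"
    and \<pi>r \<alpha>r :: "nat \<Rightarrow> real" and \<eta>r :: "nat \<Rightarrow> real^'p \<Rightarrow> real"
  assumes n0_pos: "0 < n0" and n0_lt: "n0 < n"
    and x_unit: "\<forall>i\<in>{1..n}. \<forall>j. 0 \<le> x i $ j \<and> x i $ j \<le> 1"
    and m_pos: "1 \<le> m"
    and knots: "interior_knots K xi"
    and init_pi: "0 < \<pi>r 0 \<and> \<pi>r 0 < 1"
    and init_eta: "\<eta>r 0 \<in> sieve m K xi q"
    and pi_step: "\<forall>r. \<pi>r (Suc r) =
        (\<Sum>i=n0+1..n. estep n0 x (\<pi>r r) (\<alpha>r r) (\<eta>r r) i) / real (n - n0)"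
    and am_step: "\<forall>r. \<exists>a. \<eta>r (Suc r) \<in> sieve m K xi q \<and>
        (\<forall>a'. \<forall>\<eta>'\<in>sieve m K xi q.
            mobj n x (estep n0 x (\<pi>r r) (\<alpha>r r) (\<eta>r r)) a' \<eta>'
            \<le> mobj n x (estep n0 x (\<pi>r r) (\<alpha>r r) (\<eta>r r)) a (\<eta>r (Suc r))) \<and>
        \<alpha>r (Suc r) = a - (ln (real n0 / real (n - n0) + \<pi>r (Suc r)) - ln (1 - \<pi>r (Suc r)))"
  shows "\<forall>r. profile_loglik n n0 x (\<pi>r r) (\<alpha>r r) (\<eta>r r)
             \<le> profile_loglik n n0 x (\<pi>r (Suc r)) (\<alpha>r (Suc r)) (\<eta>r (Suc r))"
proof
  fix r
  have \<pi>_bounds: "0 < \<pi>r k \<and> \<pi>r k < 1" for k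
  proof (induction k)
    case 0
    show ?case using init_pi .
  next
    case (Suc k)
    then show ?case
      unfolding pi_step[rule_format] using em_pi_update_bounds[OF n0_pos n0_lt] by blast
  qed
  have in_sieve: "\<eta>r k \<in> sieve m K xi q" for k
    by (cases k) (use init_eta am_step in auto)
  obtain a where
    a_max: "\<forall>a'. \<forall>\<eta>'\<in>sieve m K xi q.
        mobj n x (estep n0 x (\<pi>r r) (\<alpha>r r) (\<eta>r r)) a' \<eta>'
        \<le> mobj n x (estep n0 x (\<pi>r r) (\<alpha>r r) (\<eta>r r)) a (\<eta>r (Suc r))"
    and \<alpha>_next: "\<alpha>r (Suc r) = a - em_offset (real n0) (real (n - n0)) (\<pi>r (Suc r))"
    using am_step[rule_format, of r] unfolding em_offset_def by blast
  have "mobj n x (estep n0 x (\<pi>r r) (\<alpha>r r) (\<eta>r r))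
          (\<alpha>r r + em_offset (real n0) (real (n - n0)) (\<pi>r r)) (\<eta>r r)
        \<le> mobj n x (estep n0 x (\<pi>r r) (\<alpha>r r) (\<eta>r r)) a (\<eta>r (Suc r))"
    using a_max in_sieve by blast
  then show "profile_loglik n n0 x (\<pi>r r) (\<alpha>r r) (\<eta>r r)
             \<le> profile_loglik n n0 x (\<pi>r (Suc r)) (\<alpha>r (Suc r)) (\<eta>r (Suc r))"
    unfolding \<alpha>_next pi_step[rule_format]
    using profile_loglik_em_step n0_pos n0_lt \<pi>_bounds by blast
qed

end
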